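(* There exist Hermitian self-orthogonal linear codes with each of the following parameters: over $\mathbb{F}_{16}$: $[4,2,2]_{16}$, $[6,3,3]_{16}$, $[8,4,4]_{16}$, $[34,15,14]_{16}$, $[34,16,12]_{16}$, $[34,17,10]_{16}$; over $\mathbb{F}_{64}$: $[4,2,2]_{64}$, $[6,3,3]_{64}$, $[8,4,4]_{64}$, $[10,4,5]_{64}$, $[10,5,4]_{64}$, $[12,5,6]_{64}$, $[12,6,5]_{64}$, $[14,5,7]_{64}$, $[14,7,6]_{64}$, $[16,6,8]_{64}$, $[16,7,7]_{64}$, $[16,8,6]_{64}$, $[130,45,58]_{64}$, $[130,50,48]_{64}$, $[130,55,38]_{64}$, $[130,60,28]_{64}$, $[130,65,18]_{64}$.
   Context: $[n,k,d]_{Q}$ denotes a linear code over $\mathbb{F}_{Q}$ of length $n$, dimension $k$, minimum Hamming distance $d$. For $Q$ a square, the Hermitian inner product is $(\mathbf{x},\mathbf{y})_H=\sum_i x_iy_i^{\sqrt Q}$, and $\mathcal{C}$ is Hermitian self-orthogonal if $\mathcal{C}\subseteq\mathcal{C}^{\perp_H}$. *)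

theory Defs
  imports Complex_Main "HOL-Library.Function_Algebras"
begin

text \<open>Vectors of length n over a field are modelled as functions nat => 'a
that vanish outside {0..<n}; scalar multiplication is componentwise.\<close>

definition scaleF :: "'a::field \<Rightarrow> (nat \<Rightarrow> 'a) \<Rightarrow> (nat \<Rightarrow> 'a)" where
  "scaleF c x = (\<lambda>i. c * x i)"

definition vecs :: "nat \<Rightarrow> (nat \<Rightarrow> 'a::zero) set" where
  "vecs n = {x. \<forall>i\<ge>n. x i = 0}"

definition hamming_dist :: "nat \<Rightarrow> (nat \<Rightarrow> 'a) \<Rightarrow> (nat \<Rightarrow> 'a) \<Rightarrow> nat" where
  "hamming_dist n x y = card {i\<in>{0..<n}. x i \<noteq> y i}"

definition min_dist :: "nat \<Rightarrow> (nat \<Rightarrow> 'a) set \<Rightarrow> nat" where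
  "min_dist n C = Min {hamming_dist n x y | x y. x \<in> C \<and> y \<in> C \<and> x \<noteq> y}"

definition linear_code :: "nat \<Rightarrow> nat \<Rightarrow> nat \<Rightarrow> (nat \<Rightarrow> 'a::field) set \<Rightarrow> bool" where
  "linear_code n k d C \<longleftrightarrow> C \<subseteq> vecs n \<and> Modules.module.subspace scaleF C
     \<and> Vector_Spaces.vector_space.dim scaleF C = k \<and> min_dist n C = d"

text \<open>Hermitian inner product over F_{q^2}: (x,y)_H = sum x_i y_i^q.\<close>
definition herm_inner :: "nat \<Rightarrow> nat \<Rightarrow> (nat \<Rightarrow> 'a::field) \<Rightarrow> (nat \<Rightarrow> 'a) \<Rightarrow> 'a" where
  "herm_inner q n x y = (\<Sum>i<n. x i * y i ^ q)"

definition herm_self_orth :: "nat \<Rightarrow> nat \<Rightarrow> (nat \<Rightarrow> 'a::field) set \<Rightarrow> bool" where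
  "herm_self_orth q n C \<longleftrightarrow> (\<forall>x\<in>C. \<forall>y\<in>C. herm_inner q n x y = 0)"

end

theory Submission
  imports Defs "HOL-Computational_Algebra.Polynomial"
begin

text \<open>
  Every code is obtained from the construction \<open>(u + v | u + \<mu> v)\<close>, \<open>u \<in> C1\<close>, \<open>v \<in> C2\<close>,
  applied to two generalized Reed-Solomon codes over a field with \<open>q\<^sup>2\<close> elements, \<open>q = 2\<^sup>r\<close>.
  In characteristic 2 the Hermitian product of two such words is
  \<open>(1 + \<mu>\<^sup>q)(u, v') + (1 + \<mu>)(v, u') + (1 + \<mu>\<^sup>q\<^sup>+\<^sup>1)(v, v')\<close>, the \<open>(u, u')\<close> term occurring
  twice. Hence the result is Hermitian self-orthogonal once \<open>C1\<close> is orthogonal to \<open>C2\<close> and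
  either \<open>\<mu>\<^sup>q\<^sup>+\<^sup>1 = 1\<close> or \<open>C2\<close> is self-orthogonal; for \<open>\<mu> \<noteq> 1\<close> it has dimension \<open>k1 + k2\<close>
  and minimum distance \<open>min (2 d1) d2\<close>.

  For the codes of length \<open>2 (q - t)\<close>, \<open>C1\<close> and \<open>C2\<close> evaluate at the points of the subfield
  \<open>F\<^sub>q\<close> outside a \<open>t\<close>-set \<open>T\<close>, with column multipliers \<open>1\<close> and \<open>\<Prod>b\<in>T. (x - b)\<close>, and
  \<open>\<mu> = 0\<close>. For the codes of length \<open>2 (q\<^sup>2 + 1)\<close>, \<open>C1\<close> and \<open>C2\<close> are extended by the point
  at infinity and evaluate at all points \<open>x\<close> of the field, \<open>C2\<close> at their Frobenius images
  \<open>x\<^sup>q\<close>, \<open>C1\<close> with a monic multiplier of degree \<open>m\<close> having \<open>m mod 2\<close> roots; here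
  \<open>\<mu>\<^sup>q\<^sup>+\<^sup>1 = 1 \<noteq> \<mu>\<close>. In both cases orthogonality comes down to the power sums over a finite
  field \<open>F\<close>: \<open>\<Sum>a\<in>F. a\<^sup>i\<close> vanishes for \<open>i < |F| - 1\<close> and equals \<open>-1\<close> for \<open>i = |F| - 1\<close>.
\<close>


section \<open>Finite fields and the Frobenius map\<close>

lemma of_nat_card_UNIV_eq_0:
  assumes "finite (UNIV :: 'a::ring_1 set)"
  shows "of_nat (card (UNIV :: 'a set)) = (0::'a)"
proof -
  have "(\<Sum>x\<in>UNIV. x + 1) = (\<Sum>x\<in>(UNIV::'a set). x)"
    by (rule sum.reindex_bij_witness[of _ "\<lambda>x. x - 1" "\<lambda>x. x + 1"]) auto
  then show ?thesis
    by (simp add: sum.distrib)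
qed

lemma power_card_UNIV_minus_1:
  fixes x :: "'a::field"
  assumes fin: "finite (UNIV :: 'a set)" and "x \<noteq> 0"
  shows "x ^ (card (UNIV :: 'a set) - 1) = 1"
proof -
  let ?U = "UNIV - {0::'a}"
  have "(\<Prod>a\<in>?U. x * a) = (\<Prod>a\<in>?U. a)"
    by (rule prod.reindex_bij_witness[of _ "\<lambda>a. a / x" "\<lambda>a. x * a"]) (use \<open>x \<noteq> 0\<close> in auto)
  then have "x ^ card ?U = 1"
    using fin by (simp add: prod.distrib)
  then show ?thesis
    using fin by (simp add: card_Diff_singleton)
qed

lemma power_card_UNIV:
  assumes "finite (UNIV :: 'a::field set)"
  shows "(x::'a) ^ card (UNIV :: 'a set) = x"
proof (cases "x = 0")
  case False
  have "card (UNIV :: 'a set) = Suc (card (UNIV :: 'a set) - 1)"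
    using assms by (simp add: finite_UNIV_card_ge_0)
  then show ?thesis
    by (metis False assms power_Suc power_card_UNIV_minus_1 mult_1_right)
qed (use assms in \<open>simp add: finite_UNIV_card_ge_0\<close>)

lemma two_eq_0_if_card_power_2:
  assumes "card (UNIV :: 'a::field set) = 2 ^ k" and "0 < k"
  shows "(2::'a) = 0"
proof -
  have "finite (UNIV :: 'a set)"
    using assms(1) card.infinite by fastforce
  then have "(2::'a) ^ k = 0"
    using of_nat_card_UNIV_eq_0 assms(1) by (metis of_nat_numeral of_nat_power)
  then show ?thesis
    by simp
qed

lemma frobenius_add_char_2:
  fixes x y :: "'a::comm_ring_1"
  assumes "(2::'a) = 0"
  shows "(x + y) ^ 2 ^ r = x ^ 2 ^ r + y ^ 2 ^ r"
proof (induction r)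
  case (Suc r)
  have "(x + y) ^ 2 ^ Suc r = ((x + y) ^ 2 ^ r) ^ 2"
    by (simp add: power_mult[symmetric] mult.commute)
  also have "\<dots> = (x ^ 2 ^ r) ^ 2 + (y ^ 2 ^ r) ^ 2"
    using assms by (simp add: Suc power2_sum)
  also have "\<dots> = x ^ 2 ^ Suc r + y ^ 2 ^ Suc r"
    by (simp add: power_mult[symmetric] mult.commute)
  finally show ?case .
qed simp

context
  fixes q :: nat
  assumes frobenius_add: "\<And>x y :: 'a::comm_ring_1. (x + y) ^ q = x ^ q + y ^ q"
begin

lemma frobenius_zero: "(0::'a) ^ q = 0"
  using frobenius_add[of 0 0] by simp

lemma frobenius_sum: "(\<Sum>i\<in>I. f i) ^ q = (\<Sum>i\<in>I. (f i :: 'a) ^ q)"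
  by (induction I rule: infinite_finite_induct) (simp_all add: frobenius_zero frobenius_add)

lemma frobenius_diff: "((x::'a) - y) ^ q = x ^ q - y ^ q"
  using frobenius_add[of "x - y" y] by (simp add: algebra_simps)

lemma poly_frobenius: "poly p (x::'a) ^ q = poly (map_poly (\<lambda>c. c ^ q) p) (x ^ q)"
  by (induction p) (simp_all add: map_poly_pCons frobenius_zero frobenius_add power_mult_distrib)

end

lemma card_power_eq_le:
  assumes "0 < j"
  shows "finite {x::'a::field. x ^ j = c}" and "card {x::'a. x ^ j = c} \<le> j"
proof -
  define p :: "'a poly" where "p = monom 1 j + [:-c:]"
  have "degree p = j"
    using assms by (simp add: p_def degree_add_eq_left degree_monom_eq)
  moreover have "p \<noteq> 0"
    using assms \<open>degree p = j\<close> by auto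
  moreover have "{x. poly p x = 0} = {x. x ^ j = c}"
    by (simp add: p_def poly_monom)
  ultimately show "finite {x::'a. x ^ j = c}" "card {x::'a. x ^ j = c} \<le> j"
    using poly_roots_finite[of p] card_poly_roots_bound[of p] by simp_all
qed

lemma card_fixed_points_le:
  assumes "2 \<le> q"
  shows "finite {x::'a::field. x ^ q = x}" and "card {x::'a. x ^ q = x} \<le> q"
proof -
  let ?R = "{x::'a. x ^ (q - 1) = 1}"
  have q: "q = Suc (q - 1)" "0 < q - 1"
    using assms by simp_all
  have "x ^ (q - 1) = 1" if "x ^ q = x" "x \<noteq> 0" for x :: 'a
    using that q(1) by (metis mult_cancel_left1 power_Suc)
  then have sub: "{x::'a. x ^ q = x} \<subseteq> insert 0 ?R"
    by blast
  have fin: "finite (insert 0 ?R)"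
    using card_power_eq_le(1)[OF q(2)] by simp
  then show "finite {x::'a. x ^ q = x}"
    using sub by (rule finite_subset[rotated])
  have "card {x::'a. x ^ q = x} \<le> card (insert 0 ?R)"
    using fin sub by (rule card_mono)
  also have "\<dots> \<le> Suc (q - 1)"
    using card_insert_le_m1[of "Suc (q - 1)" ?R 0] card_power_eq_le(2)[OF q(2), of 1] by simp
  finally show "card {x::'a. x ^ q = x} \<le> q"
    using q(1) by simp
qed

lemma card_subfield:
  assumes card: "card (UNIV :: 'a::field set) = q * q" and "2 \<le> q"
  shows "card {x::'a. x ^ q = x} = q"
proof -
  let ?F = "{x::'a. x ^ q = x}"
  have fin: "finite (UNIV :: 'a set)"
    using card assms(2) card.infinite by fastforce
  have "(x ^ (q + 1)) ^ q = x ^ (q + 1)" for x :: 'a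
  proof -
    have "(x ^ (q + 1)) ^ q = x ^ (q * q) * x ^ q"
      by (simp add: power_mult[symmetric] power_add algebra_simps)
    then show ?thesis
      using power_card_UNIV[OF fin, of x] card by simp
  qed
  then have "UNIV = (\<Union>c\<in>?F. {x::'a. x ^ (q + 1) = c})"
    by auto
  \<comment> \<open>the norm map \<open>x \<mapsto> x ^ (q + 1)\<close> lands in ?F and has fibres of size at most q + 1\<close>
  then have "q * q \<le> (\<Sum>c\<in>?F. card {x::'a. x ^ (q + 1) = c})"
    using card card_UN_le[OF card_fixed_points_le(1)[OF assms(2)]] by metis
  also have "\<dots> \<le> (\<Sum>c\<in>?F. q + 1)"
    by (intro sum_mono) (use card_power_eq_le(2)[of "q + 1"] in simp)
  finally have "q * q \<le> card ?F * (q + 1)"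
    by simp
  moreover have "(q - 1) * (q + 1) < q * q"
    using assms(2) by (simp add: algebra_simps)
  ultimately have "q \<le> card ?F"
    using mult_le_mono1[of "card ?F" "q - 1" "q + 1"] by linarith
  then show ?thesis
    using card_fixed_points_le(2)[OF assms(2), where 'a='a] by simp
qed

lemma square_field_char_2:
  assumes card: "card (UNIV :: 'a::field set) = q * q" and q: "q = 2 ^ r" "0 < r"
  shows "2 \<le> q" and "(2::'a) = 0" and "\<And>x y :: 'a. (x + y) ^ q = x ^ q + y ^ q"
    and "\<And>x :: 'a. x ^ (q * q) = x" and "card {x::'a. x ^ q = x} = q" and "of_nat q = (0::'a)"
    and "finite (UNIV :: 'a set)"
proof -
  show "2 \<le> q"
    using q power_increasing[of 1 r "2::nat"] by simp
  show fin: "finite (UNIV :: 'a set)"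
    using card \<open>2 \<le> q\<close> card.infinite by fastforce
  show two: "(2::'a) = 0"
    using card q by (intro two_eq_0_if_card_power_2[of "r + r"]) (simp_all add: power_add)
  show "(x + y) ^ q = x ^ q + y ^ q" for x y :: 'a
    unfolding q by (rule frobenius_add_char_2[OF two])
  show "x ^ (q * q) = x" for x :: 'a
    using power_card_UNIV[OF fin, of x] card by simp
  show "card {x::'a. x ^ q = x} = q"
    by (rule card_subfield[OF card \<open>2 \<le> q\<close>])
  show "of_nat q = (0::'a)"
    using two q by simp
qed

lemma inj_on_frobenius_comp:
  fixes p :: "'b \<Rightarrow> 'a::field"
  assumes "inj_on p A" and inv: "\<And>x::'a. x ^ (q * q) = x"
  shows "inj_on (\<lambda>i. p i ^ q) A"
proof (rule inj_onI)
  fix i j assume "i \<in> A" "j \<in> A" "p i ^ q = p j ^ q"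
  have "p i = (p i ^ q) ^ q"
    by (simp add: inv power_mult[symmetric])
  also have "\<dots> = p j"
    by (simp add: \<open>p i ^ q = p j ^ q\<close> inv power_mult[symmetric])
  finally show "i = j"
    using \<open>inj_on p A\<close> \<open>i \<in> A\<close> \<open>j \<in> A\<close> by (auto dest: inj_onD)
qed

lemma exists_unit_circle_ne_1:
  assumes card: "card (UNIV :: 'a::field set) = q * q" and "2 \<le> q"
  shows "\<exists>\<mu> :: 'a. \<mu> ^ (q + 1) = 1 \<and> \<mu> \<noteq> 1"
proof -
  have fin: "finite (UNIV :: 'a set)"
    using card \<open>2 \<le> q\<close> card.infinite by fastforce
  have "q * 2 \<le> q * q"
    using \<open>2 \<le> q\<close> by simp
  then have "q - 1 < q * q - 1"
    using \<open>2 \<le> q\<close> by linarith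
  moreover have "card (UNIV - {0::'a}) = q * q - 1"
    using fin card by (simp add: card_Diff_singleton)
  moreover have "finite {y::'a. y ^ (q - 1) = 1}" "card {y::'a. y ^ (q - 1) = 1} \<le> q - 1"
    using card_power_eq_le[of "q - 1"] \<open>2 \<le> q\<close> by simp_all
  ultimately have "\<not> UNIV - {0::'a} \<subseteq> {y. y ^ (q - 1) = 1}"
    using card_mono[of "{y::'a. y ^ (q - 1) = 1}" "UNIV - {0}"] by linarith
  then obtain y :: 'a where y: "y \<noteq> 0" "y ^ (q - 1) \<noteq> 1"
    by auto
  have "(q - 1) * (q + 1) = card (UNIV :: 'a set) - 1"
    using card \<open>2 \<le> q\<close> by (simp add: algebra_simps)
  then have "(y ^ (q - 1)) ^ (q + 1) = y ^ (card (UNIV :: 'a set) - 1)"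
    by (simp only: power_mult[symmetric])
  then have "(y ^ (q - 1)) ^ (q + 1) = 1"
    using power_card_UNIV_minus_1[OF fin y(1)] by simp
  then show ?thesis
    using y(2) by blast
qed

lemma exists_monic_poly_card_roots:
  assumes fin: "finite (UNIV :: 'a::field set)"
  shows "\<exists>P :: 'a poly. degree P = m \<and> lead_coeff P = 1 \<and> card {x. poly P x = 0} = m mod 2"
proof -
  have "\<not> inj (\<lambda>x::'a. x ^ 2 + x)"
  proof
    assume "inj (\<lambda>x::'a. x ^ 2 + x)"
    moreover have "(0::'a) ^ 2 + 0 = (- 1) ^ 2 + (- 1)"
      by simp
    ultimately have "(0::'a) = - 1"
      by (rule injD)
    then show False
      by simp
  qed
  then have "\<not> surj (\<lambda>x::'a. x ^ 2 + x)"
    using finite_UNIV_surj_inj[OF fin] by blast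
  then obtain c where c: "\<And>x::'a. c \<noteq> x ^ 2 + x"
    by (auto simp: surj_def)
  define R where "R = [:- c, 1, 1:]"
  have R: "degree R = 2" "lead_coeff R = 1" "\<And>x. poly R x \<noteq> 0"
    using c by (auto simp: R_def power2_eq_square algebra_simps)
  define P where "P = monom 1 (m mod 2) * R ^ (m div 2)"
  have "R \<noteq> 0"
    using R(1) by auto
  then have "lead_coeff P = 1"
    using R(2) by (simp add: P_def lead_coeff_mult lead_coeff_power degree_monom_eq)
  moreover have "degree P = m"
    using R(1) \<open>R \<noteq> 0\<close> by (simp add: P_def degree_mult_eq degree_monom_eq degree_power_eq)
  moreover have "{x. poly P x = 0} = (if m mod 2 = 0 then {} else {0})"
    using R(3) by (auto simp: P_def poly_monom)
  ultimately show ?thesis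
    by (intro exI[of _ P]) (simp add: mod2_eq_if)
qed

section \<open>Power sums over a finite field\<close>

lemma sum_power_fixed_points_eq_0:
  assumes card: "card {x::'a::field. x ^ Q = x} = Q" and "0 < i" "i < Q - 1"
  shows "(\<Sum>a | a ^ Q = a. (a::'a) ^ i) = 0"
proof -
  let ?A = "{x::'a. x ^ Q = x}"
  have "finite ?A" "0 \<in> ?A"
    using assms card_ge_0_finite[of ?A] by auto
  have "\<not> ?A - {0} \<subseteq> {x::'a. x ^ i = 1}"
  proof
    assume "?A - {0} \<subseteq> {x::'a. x ^ i = 1}"
    then have "card (?A - {0}) \<le> card {x::'a. x ^ i = 1}"
      by (rule card_mono[OF card_power_eq_le(1)[OF \<open>0 < i\<close>]])
    also have "\<dots> \<le> i"
      by (rule card_power_eq_le(2)[OF \<open>0 < i\<close>])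
    finally show False
      using assms \<open>finite ?A\<close> \<open>0 \<in> ?A\<close> by (simp add: card_Diff_singleton)
  qed
  then obtain y :: 'a where y: "y ^ Q = y" "y \<noteq> 0" "y ^ i \<noteq> 1"
    by auto
  \<comment> \<open>multiplication by y permutes ?A\<close>
  have "(\<Sum>a\<in>?A. a ^ i) = (\<Sum>a\<in>?A. (y * a) ^ i)"
    by (rule sum.reindex_bij_witness[of _ "\<lambda>a. y * a" "\<lambda>a. a / y"])
      (use y in \<open>simp_all add: power_mult_distrib power_divide\<close>)
  also have "\<dots> = y ^ i * (\<Sum>a\<in>?A. a ^ i)"
    by (simp add: power_mult_distrib sum_distrib_left)
  finally have eq: "(\<Sum>a\<in>?A. a ^ i) = y ^ i * (\<Sum>a\<in>?A. a ^ i)" .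
  have "(y ^ i - 1) * (\<Sum>a\<in>?A. a ^ i) = 0"
    by (simp only: left_diff_distrib mult_1_left eq[symmetric] diff_self)
  then show ?thesis
    using y(3) by simp
qed

lemma sum_power_fixed_points:
  assumes card: "card {x::'a::field. x ^ Q = x} = Q" and char: "of_nat Q = (0::'a)"
    and "2 \<le> Q" and "i < Q"
  shows "(\<Sum>a | a ^ Q = a. (a::'a) ^ i) = (if i = Q - 1 then -1 else 0)"
proof -
  let ?A = "{x::'a. x ^ Q = x}"
  have fin: "finite ?A" "0 \<in> ?A"
    using card \<open>2 \<le> Q\<close> card_ge_0_finite[of ?A] by auto
  consider "i = 0" | "i = Q - 1" | "0 < i" "i < Q - 1"
    using \<open>i < Q\<close> by linarith
  then show ?thesis
  proof cases
    case 1
    then show ?thesis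
      using card char \<open>2 \<le> Q\<close> by simp
  next
    case 2
    have "a ^ (Q - 1) = 1" if "a \<in> ?A - {0}" for a
    proof -
      have "a * a ^ (Q - 1) = a ^ Q"
        using \<open>2 \<le> Q\<close> by (metis Suc_diff_1 power_Suc less_le_trans zero_less_numeral)
      then have "a * a ^ (Q - 1) = a * 1"
        using that by simp
      then show ?thesis
        using that by simp
    qed
    moreover have "(\<Sum>a\<in>?A. a ^ i) = (\<Sum>a\<in>?A - {0}. a ^ i)"
      by (rule sum.mono_neutral_right) (use fin 2 \<open>2 \<le> Q\<close> in auto)
    ultimately have "(\<Sum>a\<in>?A. a ^ i) = (\<Sum>a\<in>?A - {0}. 1)"
      using 2 by simp
    also have "\<dots> = of_nat Q - 1"
      using fin card \<open>2 \<le> Q\<close> by (simp add: card_Diff_singleton)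
    finally show ?thesis
      using 2 char by simp
  next
    case 3
    then show ?thesis
      using sum_power_fixed_points_eq_0[OF card] by simp
  qed
qed

lemma sum_poly_fixed_points:
  assumes "card {x::'a::field. x ^ Q = x} = Q" and "of_nat Q = (0::'a)"
    and "2 \<le> Q" and "degree p < Q"
  shows "(\<Sum>a | a ^ Q = a. poly p (a::'a)) = - coeff p (Q - 1)"
proof -
  have "poly p a = (\<Sum>i<Q. coeff p i * a ^ i)" for a
    unfolding poly_altdef
    by (rule sum.mono_neutral_left) (use \<open>degree p < Q\<close> in \<open>auto simp: coeff_eq_0\<close>)
  then have "(\<Sum>a | a ^ Q = a. poly p a) = (\<Sum>i<Q. coeff p i * (\<Sum>a | a ^ Q = a. a ^ i))"
    by (simp add: sum_distrib_left sum.swap[of _ "{a. a ^ Q = a}"])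
  also have "\<dots> = (\<Sum>i<Q. if i = Q - 1 then - coeff p i else 0)"
    by (rule sum.cong) (simp_all add: sum_power_fixed_points[OF assms(1-3)])
  also have "\<dots> = - coeff p (Q - 1)"
    using \<open>2 \<le> Q\<close> by simp
  finally show ?thesis .
qed

lemma sum_poly_subfield_eq_0:
  assumes "card {x::'a::field. x ^ q = x} = q" and "of_nat q = (0::'a)" and "2 \<le> q"
    and "degree h < q - 1"
  shows "(\<Sum>a | a ^ q = a. poly h (a::'a)) = 0"
  using sum_poly_fixed_points[OF assms(1-3), of h] assms(4) by (simp add: coeff_eq_0)

lemma sum_square_subfield_eq_0:
  assumes char: "(2::'a::field) = 0"
    and F: "card {x::'a. x ^ q = x} = q" "of_nat q = (0::'a)" "2 \<le> q" and "degree u < q - 1"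
  shows "(\<Sum>a | a ^ q = a. poly u (a::'a) ^ 2) = 0"
proof -
  have "\<And>x y :: 'a. (x + y) ^ 2 = x ^ 2 + y ^ 2"
    using frobenius_add_char_2[OF char, of _ _ 1] by simp
  then have "(\<Sum>a | a ^ q = a. poly u a ^ 2) = (\<Sum>a | a ^ q = a. poly u a) ^ 2"
    by (rule frobenius_sum[symmetric])
  also have "\<dots> = 0"
    using sum_poly_subfield_eq_0[OF F \<open>degree u < q - 1\<close>] by simp
  finally show ?thesis .
qed

interpretation vs: vector_space "scaleF :: 'a::field \<Rightarrow> (nat \<Rightarrow> 'a) \<Rightarrow> nat \<Rightarrow> 'a"
  by unfold_locales (auto simp: scaleF_def algebra_simps)

lemma scaleF_apply [simp]: "scaleF c x i = c * x i"
  by (simp add: scaleF_def)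

definition wt :: "nat \<Rightarrow> (nat \<Rightarrow> 'a::zero) \<Rightarrow> nat" where
  "wt n x = card {i\<in>{0..<n}. x i \<noteq> 0}"

lemma hamming_dist_eq_wt: "hamming_dist n x y = wt n (x - y :: nat \<Rightarrow> 'a::ab_group_add)"
  by (simp add: hamming_dist_def wt_def)

lemma wt_zero [simp]: "wt n 0 = 0" "wt n (\<lambda>i. 0) = 0"
  by (simp_all add: wt_def)

lemma wt_le: "wt n x \<le> n"
  unfolding wt_def by (rule order_trans[OF card_mono, of "{0..<n}"]) auto

lemma wt_diff_le: "wt n (x - y) \<le> wt n x + wt n (y :: nat \<Rightarrow> 'a::ab_group_add)"
proof -
  have "wt n (x - y) \<le> card ({i\<in>{0..<n}. x i \<noteq> 0} \<union> {i\<in>{0..<n}. y i \<noteq> 0})"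
    unfolding wt_def by (rule card_mono) auto
  also have "\<dots> \<le> wt n x + wt n y"
    unfolding wt_def by (rule card_Un_le)
  finally show ?thesis .
qed

lemma wt_scaleF: "c \<noteq> 0 \<Longrightarrow> wt n (scaleF c x) = wt n x"
  by (simp add: wt_def)

lemma wt_fun_upd_Suc: "wt (Suc N) (x(N := c)) = wt N x + (if c = 0 then 0 else 1)"
proof -
  have "{i\<in>{0..<Suc N}. (x(N := c)) i \<noteq> 0} = {i\<in>{0..<N}. x i \<noteq> 0} \<union> (if c = 0 then {} else {N})"
    by auto
  then show ?thesis
    by (simp add: wt_def card_Un_disjoint)
qed

lemma min_dist_eqI:
  assumes "0 \<in> C" and diff: "\<And>x y. x \<in> C \<Longrightarrow> y \<in> C \<Longrightarrow> x - y \<in> C"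
    and bound: "\<And>x. x \<in> C \<Longrightarrow> x \<noteq> 0 \<Longrightarrow> d \<le> wt n x"
    and "c \<in> C" "c \<noteq> 0" "wt n c = d"
  shows "min_dist n (C :: (nat \<Rightarrow> 'a::ab_group_add) set) = d"
proof -
  let ?D = "{hamming_dist n x y | x y. x \<in> C \<and> y \<in> C \<and> x \<noteq> y}"
  have "?D \<subseteq> {..n}"
    using wt_le by (auto simp: hamming_dist_eq_wt)
  then have "finite ?D"
    by (rule finite_subset) simp
  moreover have "d \<in> ?D"
    using assms(1,4-6) by (force simp: hamming_dist_eq_wt)
  moreover have "d \<le> m" if "m \<in> ?D" for m
    using that diff bound by (auto simp: hamming_dist_eq_wt)
  ultimately show ?thesis
    unfolding min_dist_def by (intro Min_eqI)
qed

definition lincomb :: "nat \<Rightarrow> (nat \<Rightarrow> nat \<Rightarrow> 'a::field) \<Rightarrow> (nat \<Rightarrow> 'a) \<Rightarrow> nat \<Rightarrow> 'a" where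
  "lincomb k B \<alpha> = (\<Sum>j<k. scaleF (\<alpha> j) (B j))"

lemma sum_fun_apply: "(\<Sum>j\<in>J. f j) x = (\<Sum>j\<in>J. f j x)"
  by (induction J rule: infinite_finite_induct) auto

lemma lincomb_apply: "lincomb k B \<alpha> i = (\<Sum>j<k. \<alpha> j * B j i)"
  by (simp add: lincomb_def sum_fun_apply)

lemma lincomb_cong: "(\<And>j. j < k \<Longrightarrow> \<alpha> j = \<beta> j) \<Longrightarrow> lincomb k B \<alpha> = lincomb k B \<beta>"
  by (simp add: lincomb_def)

lemma lincomb_diff: "lincomb k B \<alpha> - lincomb k B \<beta> = lincomb k B (\<lambda>j. \<alpha> j - \<beta> j)"
  by (simp add: fun_eq_iff lincomb_apply sum_subtractf left_diff_distrib)

lemma zero_in_range_lincomb: "0 \<in> range (lincomb k B)"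
proof
  show "0 = lincomb k B (\<lambda>_. 0)"
    by (simp add: fun_eq_iff lincomb_apply)
qed simp

lemma lincomb_in_vecs: "(\<And>j. j < k \<Longrightarrow> B j \<in> vecs n) \<Longrightarrow> lincomb k B \<alpha> \<in> vecs n"
  by (simp add: vecs_def lincomb_apply)

definition generates_code :: "nat \<Rightarrow> nat \<Rightarrow> nat \<Rightarrow> (nat \<Rightarrow> nat \<Rightarrow> 'a::field) \<Rightarrow> bool" where
  "generates_code n k d B \<longleftrightarrow> (\<forall>j<k. B j \<in> vecs n)
     \<and> (\<forall>\<alpha>. lincomb k B \<alpha> = 0 \<longrightarrow> (\<forall>j<k. \<alpha> j = 0))
     \<and> (\<forall>c\<in>range (lincomb k B). c \<noteq> 0 \<longrightarrow> d \<le> wt n c)"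

lemma inj_on_if_lincomb_independent:
  assumes "\<And>\<alpha>. lincomb k B \<alpha> = 0 \<Longrightarrow> \<forall>j<k. \<alpha> j = 0"
  shows "inj_on B {..<k}"
proof (rule inj_onI, rule ccontr)
  fix i j assume ij: "i \<in> {..<k}" "j \<in> {..<k}" "B i = B j" "i \<noteq> j"
  define \<alpha> where "\<alpha> l = (if l = i then 1 else if l = j then -1 else (0::'a))" for l
  have "lincomb k B \<alpha> = (\<Sum>l\<in>{i, j}. scaleF (\<alpha> l) (B l))"
    unfolding lincomb_def by (rule sum.mono_neutral_right) (use ij in \<open>auto simp: \<alpha>_def\<close>)
  also have "\<dots> = 0"
    using ij by (auto simp: \<alpha>_def fun_eq_iff)
  finally show False
    using assms ij(1) by (force simp: \<alpha>_def)
qed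

lemma span_image_eq_range_lincomb:
  assumes "inj_on B {..<k}"
  shows "vs.span (B ` {..<k}) = range (lincomb k B)"
proof -
  have "vs.span (B ` {..<k}) = range (\<lambda>u. lincomb k B (u \<circ> B))"
    by (simp add: vs.span_finite lincomb_def sum.reindex[OF assms])
  also have "\<dots> = range (lincomb k B)"
  proof (rule antisym)
    show "range (lincomb k B) \<subseteq> range (\<lambda>u. lincomb k B (u \<circ> B))"
    proof
      fix c assume "c \<in> range (lincomb k B)"
      then obtain \<alpha> where "c = lincomb k B \<alpha>"
        by blast
      also have "\<dots> = lincomb k B ((\<alpha> \<circ> the_inv_into {..<k} B) \<circ> B)"
        by (rule lincomb_cong) (simp add: the_inv_into_f_f[OF assms])
      finally show "c \<in> range (\<lambda>u. lincomb k B (u \<circ> B))"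
        by blast
    qed
  qed auto
  finally show ?thesis .
qed

lemma independent_image_if_lincomb_independent:
  assumes indep: "\<And>\<alpha>. lincomb k B \<alpha> = 0 \<Longrightarrow> \<forall>j<k. \<alpha> j = 0"
  shows "\<not> vs.dependent (B ` {..<k})"
proof
  have inj: "inj_on B {..<k}"
    using indep by (rule inj_on_if_lincomb_independent)
  assume "vs.dependent (B ` {..<k})"
  then obtain u where u: "\<exists>v\<in>B ` {..<k}. u v \<noteq> 0" "(\<Sum>v\<in>B ` {..<k}. scaleF (u v) v) = 0"
    using vs.dependent_finite[of "B ` {..<k}"] by auto
  then have "lincomb k B (u \<circ> B) = 0"
    by (simp add: lincomb_def sum.reindex[OF inj])
  then have "\<forall>j<k. (u \<circ> B) j = 0"
    by (rule indep)
  then show False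
    using u(1) by auto
qed

lemma linear_code_range_lincomb:
  assumes gen: "generates_code n k d B"
    and "c \<in> range (lincomb k B)" "c \<noteq> 0" "wt n c = d"
  shows "linear_code n k d (range (lincomb k B))"
proof -
  have indep: "\<And>\<alpha>. lincomb k B \<alpha> = 0 \<Longrightarrow> \<forall>j<k. \<alpha> j = 0"
    using gen by (simp add: generates_code_def)
  have inj: "inj_on B {..<k}"
    using indep by (rule inj_on_if_lincomb_independent)
  have span: "vs.span (B ` {..<k}) = range (lincomb k B)"
    using inj by (rule span_image_eq_range_lincomb)
  have "\<not> vs.dependent (B ` {..<k})"
    using indep by (rule independent_image_if_lincomb_independent)
  then have "vs.dim (range (lincomb k B)) = k"
    using vs.dim_span_eq_card_independent card_image[OF inj] span by fastforce
  moreover have "vs.subspace (range (lincomb k B))"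
    using vs.subspace_span span by metis
  moreover have "min_dist n (range (lincomb k B)) = d"
    by (rule min_dist_eqI[OF _ _ _ assms(2-4)])
      (use gen lincomb_diff[of k B] in \<open>auto simp: generates_code_def vs.subspace_0[OF calculation(2)]\<close>)
  moreover have "range (lincomb k B) \<subseteq> vecs n"
    using gen lincomb_in_vecs by (auto simp: generates_code_def)
  ultimately show ?thesis
    by (simp add: linear_code_def)
qed

lemma herm_inner_swap:
  fixes x y :: "nat \<Rightarrow> 'a::field"
  assumes frob: "\<And>x y :: 'a. (x + y) ^ q = x ^ q + y ^ q" and inv: "\<And>x :: 'a. x ^ (q * q) = x"
  shows "herm_inner q n y x = herm_inner q n x y ^ q"
proof -
  have "(x i * y i ^ q) ^ q = y i * x i ^ q" for i
    using inv[of "y i"] by (simp add: power_mult_distrib power_mult[symmetric] mult.commute)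
  then show ?thesis
    by (simp add: herm_inner_def frobenius_sum[OF frob])
qed

lemma herm_inner_fun_upd_Suc:
  "herm_inner q (Suc N) (x(N := a)) (y(N := b)) = herm_inner q N x y + a * b ^ q"
  by (simp add: herm_inner_def)

section \<open>The construction \<open>(u + v | u + \<mu> v)\<close>\<close>

definition plotkin :: "'a::field \<Rightarrow> nat \<Rightarrow> (nat \<Rightarrow> 'a) \<Rightarrow> (nat \<Rightarrow> 'a) \<Rightarrow> nat \<Rightarrow> 'a" where
  "plotkin \<mu> N u v i =
     (if i < N then u i + v i else if i < 2 * N then u (i - N) + \<mu> * v (i - N) else 0)"

definition plotkin_rows ::
  "'a::field \<Rightarrow> nat \<Rightarrow> nat \<Rightarrow> (nat \<Rightarrow> nat \<Rightarrow> 'a) \<Rightarrow> (nat \<Rightarrow> nat \<Rightarrow> 'a) \<Rightarrow> nat \<Rightarrow> nat \<Rightarrow> 'a" where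
  "plotkin_rows \<mu> N k1 B1 B2 j =
     (if j < k1 then plotkin \<mu> N (B1 j) 0 else plotkin \<mu> N 0 (B2 (j - k1)))"

lemma plotkin_in_vecs: "plotkin \<mu> N u v \<in> vecs (2 * N)"
  by (simp add: vecs_def plotkin_def)

lemma plotkin_0_0 [simp]: "plotkin \<mu> N 0 0 = 0"
  by (simp add: fun_eq_iff plotkin_def)

lemma sum_lessThan_add: "(\<Sum>i<m + n. f i) = (\<Sum>i<m. f i) + (\<Sum>i<n. f (m + i))" for n :: nat
  by (induction n) (simp_all add: add.assoc)

lemma lincomb_plotkin_rows:
  "lincomb (k1 + k2) (plotkin_rows \<mu> N k1 B1 B2) \<gamma>
     = plotkin \<mu> N (lincomb k1 B1 \<gamma>) (lincomb k2 B2 (\<lambda>j. \<gamma> (k1 + j)))"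
  by (simp add: fun_eq_iff lincomb_apply sum_lessThan_add plotkin_rows_def plotkin_def
      sum_distrib_left algebra_simps)

lemma range_lincomb_plotkin_rows:
  "range (lincomb (k1 + k2) (plotkin_rows \<mu> N k1 B1 B2))
     = {plotkin \<mu> N u v | u v. u \<in> range (lincomb k1 B1) \<and> v \<in> range (lincomb k2 B2)}"
proof (intro antisym subsetI)
  fix c assume "c \<in> {plotkin \<mu> N u v | u v. u \<in> range (lincomb k1 B1) \<and> v \<in> range (lincomb k2 B2)}"
  then obtain \<alpha> \<beta> where c: "c = plotkin \<mu> N (lincomb k1 B1 \<alpha>) (lincomb k2 B2 \<beta>)"
    by blast
  define \<gamma> where "\<gamma> j = (if j < k1 then \<alpha> j else \<beta> (j - k1))" for j
  have "lincomb k1 B1 \<gamma> = lincomb k1 B1 \<alpha>"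
    by (rule lincomb_cong) (simp add: \<gamma>_def)
  then have "c = lincomb (k1 + k2) (plotkin_rows \<mu> N k1 B1 B2) \<gamma>"
    by (simp add: c lincomb_plotkin_rows \<gamma>_def)
  then show "c \<in> range (lincomb (k1 + k2) (plotkin_rows \<mu> N k1 B1 B2))"
    by blast
qed (auto simp: lincomb_plotkin_rows)

lemma plotkin_eq_0_iff:
  assumes "u \<in> vecs N" "v \<in> vecs N" "\<mu> \<noteq> 1"
  shows "plotkin \<mu> N u v = 0 \<longleftrightarrow> u = 0 \<and> v = 0"
proof
  assume z: "plotkin \<mu> N u v = 0"
  have "u i = 0 \<and> v i = 0" for i
  proof (cases "i < N")
    case True
    have "u i + v i = 0" "u i + \<mu> * v i = 0"
      using fun_cong[OF z, of i] fun_cong[OF z, of "N + i"] True by (simp_all add: plotkin_def)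
    moreover have "(\<mu> - 1) * v i = (u i + \<mu> * v i) - (u i + v i)"
      by (simp add: algebra_simps)
    ultimately have "(\<mu> - 1) * v i = 0"
      by simp
    then show ?thesis
      using \<open>u i + v i = 0\<close> \<open>\<mu> \<noteq> 1\<close> by simp
  qed (use assms in \<open>simp add: vecs_def\<close>)
  then show "u = 0 \<and> v = 0"
    by (simp add: fun_eq_iff)
qed simp

lemma wt_plotkin:
  "wt (2 * N) (plotkin \<mu> N u v) = wt N (\<lambda>i. u i + v i) + wt N (\<lambda>i. u i + \<mu> * v i)"
proof -
  let ?A = "{i\<in>{0..<N}. u i + v i \<noteq> 0}"
  let ?B = "{i\<in>{0..<N}. u i + \<mu> * v i \<noteq> 0}"
  have "(\<lambda>i. N + i) ` ?B = {i. N \<le> i \<and> i < 2 * N \<and> u (i - N) + \<mu> * v (i - N) \<noteq> 0}"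
  proof (intro antisym subsetI)
    fix i assume "i \<in> {i. N \<le> i \<and> i < 2 * N \<and> u (i - N) + \<mu> * v (i - N) \<noteq> 0}"
    then have "i = N + (i - N)" "i - N \<in> ?B"
      by auto
    then show "i \<in> (\<lambda>i. N + i) ` ?B"
      by (rule image_eqI)
  qed auto
  then have "{i\<in>{0..<2 * N}. plotkin \<mu> N u v i \<noteq> 0} = ?A \<union> (\<lambda>i. N + i) ` ?B"
    by (auto simp: plotkin_def)
  then have "wt (2 * N) (plotkin \<mu> N u v) = card (?A \<union> (\<lambda>i. N + i) ` ?B)"
    by (simp add: wt_def)
  also have "\<dots> = card ?A + card ?B"
    by (subst card_Un_disjoint) (auto simp: card_image)
  finally show ?thesis
    by (simp add: wt_def)
qed

lemma wt_plotkin_ge: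
  assumes "\<mu> \<noteq> 1" and "u \<in> vecs N" "v \<in> vecs N" "plotkin \<mu> N u v \<noteq> 0"
    and "u \<noteq> 0 \<Longrightarrow> d1 \<le> wt N u" and "v \<noteq> 0 \<Longrightarrow> d2 \<le> wt N v"
  shows "min (2 * d1) d2 \<le> wt (2 * N) (plotkin \<mu> N u v)"
proof (cases "v = 0")
  case True
  then have "u \<noteq> 0"
    using assms(4) by auto
  then show ?thesis
    using True assms(5) by (simp add: wt_plotkin)
next
  case False
  \<comment> \<open>the two halves differ by \<open>(\<mu> - 1) v\<close>\<close>
  have "(\<lambda>i. u i + \<mu> * v i) - (\<lambda>i. u i + v i) = scaleF (\<mu> - 1) v"
    by (simp add: fun_eq_iff algebra_simps)
  then have "wt N v \<le> wt N (\<lambda>i. u i + \<mu> * v i) + wt N (\<lambda>i. u i + v i)"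
    using wt_diff_le[of N "\<lambda>i. u i + \<mu> * v i" "\<lambda>i. u i + v i"] wt_scaleF[of "\<mu> - 1" N v] \<open>\<mu> \<noteq> 1\<close>
    by simp
  then show ?thesis
    using False assms(6) by (simp add: wt_plotkin)
qed

lemma generates_code_plotkin:
  assumes gen1: "generates_code N k1 d1 B1" and gen2: "generates_code N k2 d2 B2" and "\<mu> \<noteq> 1"
  shows "generates_code (2 * N) (k1 + k2) (min (2 * d1) d2) (plotkin_rows \<mu> N k1 B1 B2)"
proof -
  have vecs: "lincomb k1 B1 \<alpha> \<in> vecs N" "lincomb k2 B2 \<beta> \<in> vecs N" for \<alpha> \<beta>
    using gen1 gen2 lincomb_in_vecs by (metis generates_code_def)+
  have "\<forall>j<k1 + k2. \<gamma> j = 0" if "lincomb (k1 + k2) (plotkin_rows \<mu> N k1 B1 B2) \<gamma> = 0" for \<gamma>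
  proof -
    have "lincomb k1 B1 \<gamma> = 0" "lincomb k2 B2 (\<lambda>j. \<gamma> (k1 + j)) = 0"
      using that plotkin_eq_0_iff[OF vecs \<open>\<mu> \<noteq> 1\<close>] by (simp_all add: lincomb_plotkin_rows)
    then have "\<forall>j<k1. \<gamma> j = 0" "\<forall>j<k2. (\<lambda>j. \<gamma> (k1 + j)) j = 0"
      using gen1 gen2 unfolding generates_code_def by blast+
    then show ?thesis
      by (metis add_diff_inverse_nat nat_add_left_cancel_less)
  qed
  moreover have "min (2 * d1) d2 \<le> wt (2 * N) c"
    if "c \<in> range (lincomb (k1 + k2) (plotkin_rows \<mu> N k1 B1 B2))" "c \<noteq> 0" for c
    using that gen1 gen2 wt_plotkin_ge[OF \<open>\<mu> \<noteq> 1\<close> vecs]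
    by (auto simp: range_lincomb_plotkin_rows generates_code_def)
  ultimately show ?thesis
    by (auto simp: generates_code_def plotkin_rows_def plotkin_in_vecs)
qed

lemma herm_inner_plotkin:
  fixes u v u' v' :: "nat \<Rightarrow> 'a::field"
  assumes char: "(2::'a) = 0" and frob: "\<And>x y :: 'a. (x + y) ^ q = x ^ q + y ^ q"
  shows "herm_inner q (2 * N) (plotkin \<mu> N u v) (plotkin \<mu> N u' v')
    = (1 + \<mu> ^ q) * herm_inner q N u v' + (1 + \<mu>) * herm_inner q N v u'
      + (1 + \<mu> ^ (q + 1)) * herm_inner q N v v'"
proof -
  let ?c = "plotkin \<mu> N u v" and ?c' = "plotkin \<mu> N u' v'"
  have "herm_inner q (2 * N) ?c ?c' = (\<Sum>i<N. ?c i * ?c' i ^ q + ?c (N + i) * ?c' (N + i) ^ q)"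
    by (simp add: herm_inner_def mult_2 sum_lessThan_add sum.distrib)
  also have "\<dots> = (\<Sum>i<N. (1 + \<mu> ^ q) * (u i * v' i ^ q) + (1 + \<mu>) * (v i * u' i ^ q)
                          + (1 + \<mu> ^ (q + 1)) * (v i * v' i ^ q))"
  proof (rule sum.cong[OF refl])
    fix i assume "i \<in> {..<N}"
    \<comment> \<open>the \<open>u i * u' i ^ q\<close> terms appear twice and cancel in characteristic 2\<close>
    then have "?c i * ?c' i ^ q + ?c (N + i) * ?c' (N + i) ^ q
      = 2 * (u i * u' i ^ q) + (1 + \<mu> ^ q) * (u i * v' i ^ q) + (1 + \<mu>) * (v i * u' i ^ q)
        + (1 + \<mu> ^ (q + 1)) * (v i * v' i ^ q)"
      by (simp add: plotkin_def frob algebra_simps)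
    then show "?c i * ?c' i ^ q + ?c (N + i) * ?c' (N + i) ^ q
      = (1 + \<mu> ^ q) * (u i * v' i ^ q) + (1 + \<mu>) * (v i * u' i ^ q)
        + (1 + \<mu> ^ (q + 1)) * (v i * v' i ^ q)"
      by (simp add: char)
  qed
  also have "\<dots> = (1 + \<mu> ^ q) * herm_inner q N u v' + (1 + \<mu>) * herm_inner q N v u'
      + (1 + \<mu> ^ (q + 1)) * herm_inner q N v v'"
    by (simp add: herm_inner_def sum.distrib sum_distrib_left)
  finally show ?thesis .
qed

lemma plotkin_rows_attains:
  assumes gen1: "generates_code N k1 d1 B1" and gen2: "generates_code N k2 d2 B2" and "\<mu> \<noteq> 1"
    and attained1: "\<exists>u\<in>range (lincomb k1 B1). u \<noteq> 0 \<and> wt N u = d1"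
    and attained: "2 * d1 \<le> d2 \<or> \<mu> = 0 \<and> (\<exists>v\<in>range (lincomb k2 B2). v \<noteq> 0 \<and> wt N v = d2)"
  shows "\<exists>c\<in>range (lincomb (k1 + k2) (plotkin_rows \<mu> N k1 B1 B2)). c \<noteq> 0 \<and> wt (2 * N) c = min (2 * d1) d2"
proof -
  have vecs: "u \<in> vecs N" "v \<in> vecs N" if "u \<in> range (lincomb k1 B1)" "v \<in> range (lincomb k2 B2)" for u v
    using that gen1 gen2 lincomb_in_vecs by (auto simp: generates_code_def)
  show ?thesis
  proof (cases "2 * d1 \<le> d2")
    case True
    obtain u where "u \<in> range (lincomb k1 B1)" "u \<noteq> 0" "wt N u = d1"
      using attained1 by blast
    then show ?thesis
      using True zero_in_range_lincomb[of k2 B2] plotkin_eq_0_iff[OF vecs \<open>\<mu> \<noteq> 1\<close>]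
      unfolding range_lincomb_plotkin_rows
      by (intro bexI[of _ "plotkin \<mu> N u 0"]) (auto simp: wt_plotkin)
  next
    case False
    then obtain v where "\<mu> = 0" "v \<in> range (lincomb k2 B2)" "v \<noteq> 0" "wt N v = d2"
      using attained by blast
    then show ?thesis
      using False zero_in_range_lincomb[of k1 B1] plotkin_eq_0_iff[OF vecs \<open>\<mu> \<noteq> 1\<close>]
      unfolding range_lincomb_plotkin_rows
      by (intro bexI[of _ "plotkin \<mu> N 0 v"]) (auto simp: wt_plotkin)
  qed
qed

lemma plotkin_code:
  fixes B1 B2 :: "nat \<Rightarrow> nat \<Rightarrow> 'a::field" and \<mu> :: 'a
  assumes char: "(2::'a) = 0" and frob: "\<And>x y :: 'a. (x + y) ^ q = x ^ q + y ^ q"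
    and inv: "\<And>x :: 'a. x ^ (q * q) = x"
    and gen1: "generates_code N k1 d1 B1" and gen2: "generates_code N k2 d2 B2" and "\<mu> \<noteq> 1"
    and orth: "\<And>u v. u \<in> range (lincomb k1 B1) \<Longrightarrow> v \<in> range (lincomb k2 B2) \<Longrightarrow> herm_inner q N u v = 0"
    and orth2: "\<mu> ^ (q + 1) = 1 \<or> herm_self_orth q N (range (lincomb k2 B2))"
    and attained1: "\<exists>u\<in>range (lincomb k1 B1). u \<noteq> 0 \<and> wt N u = d1"
    and attained: "2 * d1 \<le> d2 \<or> \<mu> = 0 \<and> (\<exists>v\<in>range (lincomb k2 B2). v \<noteq> 0 \<and> wt N v = d2)"
  shows "\<exists>C :: (nat \<Rightarrow> 'a) set. linear_code (2 * N) (k1 + k2) (min (2 * d1) d2) C \<and> herm_self_orth q (2 * N) C"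
proof -
  let ?C = "range (lincomb (k1 + k2) (plotkin_rows \<mu> N k1 B1 B2))"
  have "herm_inner q N v u = 0" if "u \<in> range (lincomb k1 B1)" "v \<in> range (lincomb k2 B2)" for u v
    using herm_inner_swap[OF frob inv, where x = u and y = v] orth[OF that] frobenius_zero[OF frob]
    by simp
  then have "herm_self_orth q (2 * N) ?C"
    using orth orth2 char
    by (auto simp: range_lincomb_plotkin_rows herm_self_orth_def herm_inner_plotkin[OF char frob])
  moreover have "linear_code (2 * N) (k1 + k2) (min (2 * d1) d2) ?C"
    using linear_code_range_lincomb[OF generates_code_plotkin[OF gen1 gen2 \<open>\<mu> \<noteq> 1\<close>]]
      plotkin_rows_attains[OF gen1 gen2 \<open>\<mu> \<noteq> 1\<close> attained1 attained] by blast
  ultimately show ?thesis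
    by blast
qed

section \<open>Generalized Reed-Solomon codes\<close>

definition poly_of :: "nat \<Rightarrow> (nat \<Rightarrow> 'a::field) \<Rightarrow> 'a poly" where
  "poly_of k \<alpha> = (\<Sum>j<k. monom (\<alpha> j) j)"

lemma coeff_poly_of: "coeff (poly_of k \<alpha>) j = (if j < k then \<alpha> j else 0)"
  by (simp add: poly_of_def coeff_sum)

lemma poly_of_eq_0_iff: "poly_of k \<alpha> = 0 \<longleftrightarrow> (\<forall>j<k. \<alpha> j = 0)"
  by (metis coeff_0 coeff_poly_of poly_eqI)

lemma degree_poly_of_less:
  assumes "0 < k"
  shows "degree (poly_of k \<alpha>) < k"
proof -
  have "degree (poly_of k \<alpha>) \<le> k - 1"
    by (rule degree_le) (auto simp: coeff_poly_of)
  then show ?thesis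
    using assms by linarith
qed

lemma range_poly_of:
  assumes "0 < k"
  shows "range (poly_of k) = {f :: 'a::field poly. degree f < k}"
proof (intro antisym subsetI)
  fix f :: "'a poly" assume "f \<in> {f. degree f < k}"
  then have "f = poly_of k (coeff f)"
    by (intro poly_eqI) (simp add: coeff_poly_of coeff_eq_0)
  then show "f \<in> range (poly_of k)"
    by blast
qed (use degree_poly_of_less[OF assms] in auto)

definition grs :: "nat \<Rightarrow> (nat \<Rightarrow> 'a) \<Rightarrow> (nat \<Rightarrow> 'a) \<Rightarrow> 'a poly \<Rightarrow> nat \<Rightarrow> 'a::field" where
  "grs N p z f i = (if i < N then z i * poly f (p i) else 0)"

text \<open>Coordinate \<open>N\<close> is the evaluation at infinity: the coefficient of \<open>x ^ (k - 1)\<close>.\<close>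

definition ext_grs :: "nat \<Rightarrow> nat \<Rightarrow> (nat \<Rightarrow> 'a) \<Rightarrow> (nat \<Rightarrow> 'a) \<Rightarrow> 'a poly \<Rightarrow> nat \<Rightarrow> 'a::field" where
  "ext_grs k N p z f = (grs N p z f)(N := coeff f (k - 1))"

lemma grs_0 [simp]: "grs N p z 0 = 0"
  by (simp add: fun_eq_iff grs_def)

lemma grs_in_vecs: "grs N p z f \<in> vecs N"
  by (simp add: vecs_def grs_def)

lemma ext_grs_in_vecs: "ext_grs k N p z f \<in> vecs (Suc N)"
  by (simp add: vecs_def ext_grs_def grs_def)

lemma ext_grs_eq_0_iff: "ext_grs k N p z f = 0 \<longleftrightarrow> grs N p z f = 0 \<and> coeff f (k - 1) = 0"
  by (auto simp: ext_grs_def fun_eq_iff grs_def)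

lemma lincomb_grs: "lincomb k (\<lambda>j. grs N p z (monom 1 j)) \<alpha> = grs N p z (poly_of k \<alpha>)"
  by (simp add: fun_eq_iff lincomb_apply grs_def poly_of_def poly_sum poly_monom
      sum_distrib_left algebra_simps)

lemma lincomb_ext_grs:
  assumes "0 < k"
  shows "lincomb k (\<lambda>j. ext_grs k N p z (monom 1 j)) \<alpha> = ext_grs k N p z (poly_of k \<alpha>)"
proof -
  have "(\<Sum>j<k. \<alpha> j * coeff (monom 1 j) (k - 1)) = (\<Sum>j<k. if j = k - 1 then \<alpha> j else 0)"
    by (rule sum.cong) auto
  also have "\<dots> = \<alpha> (k - 1)"
    using assms by simp
  finally have "(\<Sum>j<k. \<alpha> j * coeff (monom 1 j) (k - 1)) = \<alpha> (k - 1)" .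
  then show ?thesis
    using lincomb_grs[of k N p z \<alpha>]
    by (auto simp: fun_eq_iff lincomb_apply ext_grs_def coeff_poly_of assms)
qed

lemma range_lincomb_grs:
  assumes "0 < k"
  shows "range (lincomb k (\<lambda>j. grs N p z (monom 1 j))) = grs N p z ` {f. degree f < k}"
  unfolding lincomb_grs range_poly_of[OF assms, symmetric] by auto

lemma range_lincomb_ext_grs:
  assumes "0 < k"
  shows "range (lincomb k (\<lambda>j. ext_grs k N p z (monom 1 j))) = ext_grs k N p z ` {f. degree f < k}"
  unfolding lincomb_ext_grs[OF assms] range_poly_of[OF assms, symmetric] by auto

lemma wt_grs_ge:
  assumes inj: "inj_on p {..<N}" and "f \<noteq> 0"
  shows "wt N z - degree f \<le> wt N (grs N p z f)"
proof -
  let ?Z = "{i\<in>{0..<N}. z i \<noteq> 0}"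
  let ?R = "{i\<in>?Z. poly f (p i) = 0}"
  have "card ?R = card (p ` ?R)"
    using inj by (intro card_image[symmetric] inj_on_subset[OF inj]) auto
  also have "\<dots> \<le> card {x. poly f x = 0}"
    by (rule card_mono[OF poly_roots_finite[OF \<open>f \<noteq> 0\<close>]]) auto
  also have "\<dots> \<le> degree f"
    by (rule card_poly_roots_bound[OF \<open>f \<noteq> 0\<close>])
  moreover have "card (?Z - ?R) = card ?Z - card ?R"
    by (rule card_Diff_subset) auto
  ultimately have "wt N z - degree f \<le> card (?Z - ?R)"
    unfolding wt_def by linarith
  also have "\<dots> \<le> wt N (grs N p z f)"
    unfolding wt_def by (rule card_mono) (auto simp: grs_def)
  finally show ?thesis .
qed

lemma wt_grs_witness:
  assumes inj: "inj_on p {..<N}" and "j \<le> wt N z"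
  obtains f where "degree f = j" "lead_coeff f = 1" "wt N (grs N p z f) = wt N z - j"
proof -
  let ?Z = "{i\<in>{0..<N}. z i \<noteq> 0}"
  obtain T where T: "T \<subseteq> ?Z" "card T = j" "finite T"
    using obtain_subset_with_card_n[of j ?Z] assms(2) unfolding wt_def by blast
  define f where "f = (\<Prod>t\<in>T. [:- p t, 1:])"
  have "degree f = j"
    unfolding f_def using T by (subst degree_prod_sum_eq) auto
  moreover have "lead_coeff f = 1"
    by (simp add: f_def lead_coeff_prod)
  moreover have "poly f (p i) = 0 \<longleftrightarrow> i \<in> T" if "i < N" for i
    using T inj that by (auto simp: f_def poly_prod inj_on_def)
  then have "{i\<in>{0..<N}. grs N p z f i \<noteq> 0} = ?Z - T"
    using T by (auto simp: grs_def)
  then have "wt N (grs N p z f) = wt N z - j"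
    using T by (simp add: wt_def card_Diff_subset)
  ultimately show ?thesis
    using that by blast
qed

lemma wt_poly_bij_betw:
  assumes p: "bij_betw p {..<n} (UNIV :: 'a::field set)"
  shows "wt n (\<lambda>i. poly P (p i)) = n - card {x. poly P x = 0}"
proof -
  let ?I = "{i\<in>{0..<n}. poly P (p i) \<noteq> 0}"
  have fin: "finite (UNIV :: 'a set)" "card (UNIV :: 'a set) = n"
    using bij_betw_finite[OF p] bij_betw_same_card[OF p] by auto
  have "card ?I = card (p ` ?I)"
    using p by (intro card_image[symmetric] inj_on_subset[OF bij_betw_imp_inj_on[OF p]]) auto
  also have "p ` ?I = UNIV - {x. poly P x = 0}"
    using p by (auto simp: bij_betw_def)
  also have "card \<dots> = n - card {x. poly P x = 0}"
    using fin card_Diff_subset[of "{x. poly P x = 0}" UNIV] by (simp add: finite_subset)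
  finally show ?thesis
    by (simp add: wt_def)
qed

lemma wt_ext_grs_ge:
  assumes inj: "inj_on p {..<N}" and "f \<noteq> 0" "degree f < k" "k \<le> wt N z"
  shows "wt N z + 2 - k \<le> wt (Suc N) (ext_grs k N p z f)"
proof -
  have wt: "wt (Suc N) (ext_grs k N p z f) = wt N (grs N p z f) + (if coeff f (k - 1) = 0 then 0 else 1)"
    by (simp add: ext_grs_def wt_fun_upd_Suc)
  have ge: "wt N z - degree f \<le> wt N (grs N p z f)"
    using wt_grs_ge[OF inj \<open>f \<noteq> 0\<close>] .
  show ?thesis
  proof (cases "coeff f (k - 1) = 0")
    case True
    then have "degree f \<noteq> k - 1"
      using \<open>f \<noteq> 0\<close> by (metis leading_coeff_0_iff)
    then show ?thesis
      using True wt ge assms(3,4) by linarith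
  next
    case False
    then have "wt (Suc N) (ext_grs k N p z f) = wt N (grs N p z f) + 1"
      using wt by simp
    then show ?thesis
      using ge assms(3,4) by linarith
  qed
qed

lemma generates_code_grs:
  assumes inj: "inj_on p {..<N}" and "k \<le> wt N z"
  shows "generates_code N k (wt N z + 1 - k) (\<lambda>j. grs N p z (monom 1 j))"
proof -
  have ge: "wt N z + 1 - k \<le> wt N (grs N p z (poly_of k \<alpha>))" if "poly_of k \<alpha> \<noteq> 0" for \<alpha>
  proof -
    have "0 < k"
      using that by (rule contrapos_np) (simp add: poly_of_def)
    then show ?thesis
      using wt_grs_ge[OF inj that, of z] degree_poly_of_less[of k \<alpha>] by linarith
  qed
  have "\<forall>j<k. \<alpha> j = 0" if "lincomb k (\<lambda>j. grs N p z (monom 1 j)) \<alpha> = 0" for \<alpha>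
    using ge[of \<alpha>] that \<open>k \<le> wt N z\<close> by (auto simp: lincomb_grs poly_of_eq_0_iff)
  moreover have "wt N z + 1 - k \<le> wt N c"
    if c: "c \<in> range (lincomb k (\<lambda>j. grs N p z (monom 1 j)))" "c \<noteq> 0" for c
  proof -
    obtain \<alpha> where "c = lincomb k (\<lambda>j. grs N p z (monom 1 j)) \<alpha>"
      using c(1) by blast
    then have c_eq: "c = grs N p z (poly_of k \<alpha>)"
      by (simp add: lincomb_grs)
    then have "poly_of k \<alpha> \<noteq> 0"
      using c(2) by auto
    then show ?thesis
      using c_eq ge by simp
  qed
  ultimately show ?thesis
    by (auto simp: generates_code_def grs_in_vecs)
qed

lemma generates_code_ext_grs:
  assumes inj: "inj_on p {..<N}" and "0 < k" "k \<le> wt N z"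
  shows "generates_code (Suc N) k (wt N z + 2 - k) (\<lambda>j. ext_grs k N p z (monom 1 j))"
proof -
  have ge: "wt N z + 2 - k \<le> wt (Suc N) (ext_grs k N p z f)" if "f \<noteq> 0" "degree f < k" for f
    using wt_ext_grs_ge[OF inj that assms(3)] .
  have "\<forall>j<k. \<alpha> j = 0" if "lincomb k (\<lambda>j. ext_grs k N p z (monom 1 j)) \<alpha> = 0" for \<alpha>
    using ge[of "poly_of k \<alpha>"] that assms(3) degree_poly_of_less[OF \<open>0 < k\<close>]
    by (auto simp: lincomb_ext_grs[OF \<open>0 < k\<close>] poly_of_eq_0_iff)
  moreover have "wt N z + 2 - k \<le> wt (Suc N) c"
    if c: "c \<in> range (lincomb k (\<lambda>j. ext_grs k N p z (monom 1 j)))" "c \<noteq> 0" for c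
  proof -
    obtain f where "c = ext_grs k N p z f" "degree f < k"
      using c(1) unfolding range_lincomb_ext_grs[OF \<open>0 < k\<close>] by blast
    moreover have "f \<noteq> 0"
      using c(2) calculation(1) by (auto simp: ext_grs_eq_0_iff)
    ultimately show ?thesis
      using ge by simp
  qed
  ultimately show ?thesis
    by (auto simp: generates_code_def ext_grs_in_vecs)
qed

lemma grs_attains:
  assumes inj: "inj_on p {..<N}" and "0 < k" "k \<le> wt N z"
  shows "\<exists>c\<in>range (lincomb k (\<lambda>j. grs N p z (monom 1 j))). c \<noteq> 0 \<and> wt N c = wt N z + 1 - k"
proof -
  have "k - 1 \<le> wt N z"
    using assms(3) by simp
  then obtain f where f: "degree f = k - 1" "wt N (grs N p z f) = wt N z - (k - 1)"
    by (rule wt_grs_witness[OF inj])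
  moreover have "grs N p z f \<noteq> 0"
  proof
    assume "grs N p z f = 0"
    then have "wt N z - (k - 1) = 0"
      using f(2) by simp
    then show False
      using assms(2,3) by linarith
  qed
  moreover have "grs N p z f \<in> range (lincomb k (\<lambda>j. grs N p z (monom 1 j)))"
    unfolding range_lincomb_grs[OF \<open>0 < k\<close>] using f(1) assms(2) by auto
  ultimately show ?thesis
    using assms(2,3) by auto
qed

lemma grs_code_nonzero_multipliers:
  assumes inj: "inj_on p {..<N}" and z: "\<forall>i<N. z i \<noteq> 0" and "0 < k" "k \<le> N"
  shows "generates_code N k (N + 1 - k) (\<lambda>j. grs N p z (monom 1 j))"
    and "\<exists>c\<in>range (lincomb k (\<lambda>j. grs N p z (monom 1 j))). c \<noteq> 0 \<and> wt N c = N + 1 - k"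
proof -
  have "{i\<in>{0..<N}. z i \<noteq> 0} = {0..<N}"
    using z by auto
  then have "wt N z = N"
    by (simp add: wt_def)
  then show "generates_code N k (N + 1 - k) (\<lambda>j. grs N p z (monom 1 j))"
    "\<exists>c\<in>range (lincomb k (\<lambda>j. grs N p z (monom 1 j))). c \<noteq> 0 \<and> wt N c = N + 1 - k"
    using generates_code_grs[OF inj, of k z] grs_attains[OF inj \<open>0 < k\<close>, of z] \<open>k \<le> N\<close> by simp_all
qed

lemma ext_grs_attains:
  assumes inj: "inj_on p {..<N}" and "0 < k" "k \<le> wt N z"
  shows "\<exists>c\<in>range (lincomb k (\<lambda>j. ext_grs k N p z (monom 1 j))). c \<noteq> 0 \<and> wt (Suc N) c = wt N z + 2 - k"
proof -
  have "k - 1 \<le> wt N z"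
    using assms(3) by simp
  then obtain f where f: "degree f = k - 1" "lead_coeff f = 1" "wt N (grs N p z f) = wt N z - (k - 1)"
    by (rule wt_grs_witness[OF inj])
  then have "wt (Suc N) (ext_grs k N p z f) = wt N z + 2 - k"
    using assms(2,3) by (simp add: ext_grs_def wt_fun_upd_Suc)
  moreover have "ext_grs k N p z f \<noteq> 0"
    using f by (simp add: ext_grs_eq_0_iff)
  moreover have "ext_grs k N p z f \<in> range (lincomb k (\<lambda>j. ext_grs k N p z (monom 1 j)))"
    unfolding range_lincomb_ext_grs[OF \<open>0 < k\<close>] using f(1) assms(2) by auto
  ultimately show ?thesis
    by blast
qed

lemma herm_inner_grs:
  fixes f g :: "'a::field poly"
  assumes frob: "\<And>x y :: 'a. (x + y) ^ q = x ^ q + y ^ q"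
  shows "herm_inner q N (grs N p z f) (grs N p' w g)
    = (\<Sum>i<N. z i * w i ^ q * poly f (p i) * poly (map_poly (\<lambda>c. c ^ q) g) (p' i ^ q))"
proof -
  have "grs N p z f i * grs N p' w g i ^ q
      = z i * w i ^ q * poly f (p i) * poly (map_poly (\<lambda>c. c ^ q) g) (p' i ^ q)" if "i < N" for i
    using that by (simp add: grs_def power_mult_distrib poly_frobenius[OF frob] mult_ac)
  then show ?thesis
    unfolding herm_inner_def by (intro sum.cong) simp_all
qed

section \<open>Codes evaluated on the subfield\<close>

lemma herm_inner_grs_subfield:
  fixes u w f g :: "'a::field poly"
  assumes frob: "\<And>x y :: 'a. (x + y) ^ q = x ^ q + y ^ q"
    and p: "bij_betw p {..<N} S" and S: "S \<subseteq> {x. x ^ q = x}"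
    and w: "\<And>a. a ^ q = a \<Longrightarrow> poly w a ^ q = poly w a"
  shows "herm_inner q N (grs N p (\<lambda>i. poly u (p i)) f) (grs N p (\<lambda>i. poly w (p i)) g)
    = (\<Sum>a\<in>S. poly (u * w * f * map_poly (\<lambda>c. c ^ q) g) a)"
proof -
  have "p i ^ q = p i" "poly w (p i) ^ q = poly w (p i)" if "i < N" for i
    using p S w that by (auto simp: bij_betw_def)
  then have "herm_inner q N (grs N p (\<lambda>i. poly u (p i)) f) (grs N p (\<lambda>i. poly w (p i)) g)
      = (\<Sum>i<N. poly (u * w * f * map_poly (\<lambda>c. c ^ q) g) (p i))"
    by (auto simp: herm_inner_grs[OF frob] intro!: sum.cong)
  also have "\<dots> = (\<Sum>a\<in>S. poly (u * w * f * map_poly (\<lambda>c. c ^ q) g) a)"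
    by (rule sum.reindex_bij_betw[OF p])
  finally show ?thesis .
qed

lemma degree_mult3_le:
  "degree (a * b * c * d) \<le> degree a + degree b + degree c + degree (d :: 'a::comm_semiring_0 poly)"
  using degree_mult_le[of "a * b * c" d] degree_mult_le[of "a * b" c] degree_mult_le[of a b]
  by linarith

lemma herm_orth_grs_subfield:
  fixes u w f g :: "'a::field poly"
  assumes frob: "\<And>x y :: 'a. (x + y) ^ q = x ^ q + y ^ q"
    and F: "card {x::'a. x ^ q = x} = q" "of_nat q = (0::'a)" "2 \<le> q"
    and p: "bij_betw p {..<N} ({x. x ^ q = x} - T)"
    and w: "\<And>a. a ^ q = a \<Longrightarrow> poly w a ^ q = poly w a"
    and T: "\<And>b. b \<in> T \<Longrightarrow> poly u b * poly w b = 0"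
    and deg: "degree u + degree w + degree f + degree g < q - 1"
  shows "herm_inner q N (grs N p (\<lambda>i. poly u (p i)) f) (grs N p (\<lambda>i. poly w (p i)) g) = 0"
proof -
  let ?h = "u * w * f * map_poly (\<lambda>c. c ^ q) g"
  have "herm_inner q N (grs N p (\<lambda>i. poly u (p i)) f) (grs N p (\<lambda>i. poly w (p i)) g)
      = (\<Sum>a\<in>{x. x ^ q = x} - T. poly ?h a)"
    by (rule herm_inner_grs_subfield[OF frob p _ w]) auto
  also have "\<dots> = (\<Sum>a | a ^ q = a. poly ?h a)"
    using F card_ge_0_finite[of "{x::'a. x ^ q = x}"] T
    by (intro sum.mono_neutral_left) auto
  also have "\<dots> = 0"
    using degree_mult3_le[of u w f "map_poly (\<lambda>c. c ^ q) g"] map_poly_degree_leq[of "\<lambda>c. c ^ q" g] deg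
    by (intro sum_poly_subfield_eq_0[OF F]) linarith
  finally show ?thesis .
qed

lemma herm_orth_const_grs_subfield:
  fixes u :: "'a::field poly"
  assumes char: "(2::'a) = 0" and frob: "\<And>x y :: 'a. (x + y) ^ q = x ^ q + y ^ q"
    and F: "card {x::'a. x ^ q = x} = q" "of_nat q = (0::'a)" "2 \<le> q"
    and p: "bij_betw p {..<N} ({x. x ^ q = x} - T)"
    and u: "\<And>b. b \<in> T \<Longrightarrow> poly u b = 0" "\<And>a. a ^ q = a \<Longrightarrow> poly u a ^ q = poly u a"
    and deg: "degree u < q - 1" and "degree f = 0" "degree g = 0"
  shows "herm_inner q N (grs N p (\<lambda>i. poly u (p i)) f) (grs N p (\<lambda>i. poly u (p i)) g) = 0"
proof -
  define c d where "c = coeff f 0" and "d = coeff g 0"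
  have fg: "f = [:c:]" "g = [:d:]"
    using degree_0_id[OF \<open>degree f = 0\<close>] degree_0_id[OF \<open>degree g = 0\<close>]
    by (simp_all add: c_def d_def)
  have "herm_inner q N (grs N p (\<lambda>i. poly u (p i)) [:c:]) (grs N p (\<lambda>i. poly u (p i)) [:d:])
      = (\<Sum>a\<in>{x. x ^ q = x} - T. c * d ^ q * poly u a ^ 2)"
  proof -
    have "map_poly (\<lambda>c. c ^ q) [:d:] = [:d ^ q:]"
      using frobenius_zero[OF frob] by (simp add: map_poly_pCons)
    then have eq: "poly (u * u * [:c:] * map_poly (\<lambda>c. c ^ q) [:d:]) a = c * d ^ q * poly u a ^ 2"
      for a by (simp add: power2_eq_square)
    have sub: "{x. x ^ q = x} - T \<subseteq> {x::'a. x ^ q = x}"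
      by blast
    have "herm_inner q N (grs N p (\<lambda>i. poly u (p i)) [:c:]) (grs N p (\<lambda>i. poly u (p i)) [:d:])
        = (\<Sum>a\<in>{x. x ^ q = x} - T. poly (u * u * [:c:] * map_poly (\<lambda>c. c ^ q) [:d:]) a)"
      by (rule herm_inner_grs_subfield[OF frob p sub u(2)])
    then show ?thesis
      by (simp only: eq)
  qed
  also have "\<dots> = (\<Sum>a | a ^ q = a. c * d ^ q * poly u a ^ 2)"
    using F card_ge_0_finite[of "{x::'a. x ^ q = x}"] u(1)
    by (intro sum.mono_neutral_left) auto
  also have "\<dots> = c * d ^ q * (\<Sum>a | a ^ q = a. poly u a ^ 2)"
    by (simp add: sum_distrib_left)
  also have "\<dots> = 0"
    using sum_square_subfield_eq_0[OF char F deg] by simp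
  finally show ?thesis
    by (simp add: fg)
qed

lemma herm_self_orth_grs_subfield:
  fixes u f g :: "'a::field poly"
  assumes char: "(2::'a) = 0" and frob: "\<And>x y :: 'a. (x + y) ^ q = x ^ q + y ^ q"
    and F: "card {x::'a. x ^ q = x} = q" "of_nat q = (0::'a)" "2 \<le> q"
    and p: "bij_betw p {..<N} ({x. x ^ q = x} - T)"
    and u: "\<And>b. b \<in> T \<Longrightarrow> poly u b = 0" "\<And>a. a ^ q = a \<Longrightarrow> poly u a ^ q = poly u a"
    and k: "2 * degree u + 2 * k \<le> q \<or> k = 1 \<and> degree u + 2 \<le> q"
    and "degree f < k" "degree g < k"
  shows "herm_inner q N (grs N p (\<lambda>i. poly u (p i)) f) (grs N p (\<lambda>i. poly u (p i)) g) = 0"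
  using k
proof
  assume "2 * degree u + 2 * k \<le> q"
  then show ?thesis
    by (intro herm_orth_grs_subfield[OF frob F p u(2)]) (use u(1) \<open>degree f < k\<close> \<open>degree g < k\<close> in auto)
next
  assume "k = 1 \<and> degree u + 2 \<le> q"
  then show ?thesis
    by (intro herm_orth_const_grs_subfield[OF char frob F p u]) (use assms in auto)
qed

lemma subfield_vanishing_poly:
  fixes T :: "'a::field set"
  assumes frob: "\<And>x y :: 'a. (x + y) ^ q = x ^ q + y ^ q" and T: "T \<subseteq> {x. x ^ q = x}" "finite T"
  defines "P \<equiv> \<Prod>b\<in>T. [:- b, 1:]"
  shows "degree P = card T" and "poly P a = 0 \<longleftrightarrow> a \<in> T"
    and "a ^ q = a \<Longrightarrow> poly P a ^ q = poly P a"
proof -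
  show "degree P = card T"
    unfolding P_def by (subst degree_prod_sum_eq) simp_all
  show "poly P a = 0 \<longleftrightarrow> a \<in> T"
    using T(2) by (simp add: P_def poly_prod)
  have P: "poly P x = (\<Prod>b\<in>T. x - b)" for x
    by (simp add: P_def poly_prod)
  assume "a ^ q = a"
  then have "(\<Prod>b\<in>T. (a - b) ^ q) = (\<Prod>b\<in>T. a - b)"
    using T(1) by (intro prod.cong) (auto simp: frobenius_diff[OF frob])
  then show "poly P a ^ q = poly P a"
    by (simp add: P prod_power_distrib)
qed

lemma subfield_plotkin_code:
  fixes p :: "nat \<Rightarrow> 'a::field"
  assumes card: "card (UNIV :: 'a set) = q * q" and q: "q = 2 ^ r" "0 < r"
    and T: "T \<subseteq> {x. x ^ q = x}" "finite T"
    and p: "bij_betw p {..<N} ({x. x ^ q = x} - T)"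
    and k: "0 < k1" "0 < k2" "k1 + k2 + card T \<le> q"
    and k2: "2 * card T + 2 * k2 \<le> q \<or> k2 = 1 \<and> card T + 2 \<le> q"
  shows "\<exists>C :: (nat \<Rightarrow> 'a) set. linear_code (2 * N) (k1 + k2) (min (2 * (N + 1 - k1)) (N + 1 - k2)) C
           \<and> herm_self_orth q (2 * N) C"
proof -
  note F = square_field_char_2[OF card q]
  define P where "P = (\<Prod>b\<in>T. [:- b, 1:])"
  note P = subfield_vanishing_poly[OF F(3) T, folded P_def]
  have inj: "inj_on p {..<N}"
    using p by (rule bij_betw_imp_inj_on)
  have z: "\<forall>i<N. poly 1 (p i) \<noteq> (0::'a)" "\<forall>i<N. poly P (p i) \<noteq> 0"
    using p P(2) by (auto simp: bij_betw_def)
  have "k1 \<le> N" "k2 \<le> N"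
    using bij_betw_same_card[OF p] T F(5) k by (simp_all add: card_Diff_subset)
  note C1 = grs_code_nonzero_multipliers[OF inj z(1) k(1) \<open>k1 \<le> N\<close>]
    and C2 = grs_code_nonzero_multipliers[OF inj z(2) k(2) \<open>k2 \<le> N\<close>]
  let ?B1 = "\<lambda>j. grs N p (\<lambda>i. poly 1 (p i)) (monom 1 j)"
  let ?B2 = "\<lambda>j. grs N p (\<lambda>i. poly P (p i)) (monom 1 j)"
  \<comment> \<open>P vanishes on T, so the sums over the evaluation points extend to all of \<open>F\<^sub>q\<close>\<close>
  have orth12: "herm_inner q N (grs N p (\<lambda>i. poly 1 (p i)) f) (grs N p (\<lambda>i. poly P (p i)) g) = 0"
    if "degree f < k1" "degree g < k2" for f g
    by (rule herm_orth_grs_subfield[OF F(3,5,6,1) p P(3)]) (use P that k in auto)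
  have orth22: "herm_inner q N (grs N p (\<lambda>i. poly P (p i)) f) (grs N p (\<lambda>i. poly P (p i)) g) = 0"
    if "degree f < k2" "degree g < k2" for f g
    by (rule herm_self_orth_grs_subfield[OF F(2,3,5,6,1) p _ P(3) _ that]) (use P k2 in auto)
  show ?thesis
  proof (rule plotkin_code[OF F(2,3,4) C1(1) C2(1), where \<mu> = 0])
    show "herm_inner q N u v = 0"
      if "u \<in> range (lincomb k1 ?B1)" "v \<in> range (lincomb k2 ?B2)" for u v
      using that orth12 by (auto simp: range_lincomb_grs[OF k(1)] range_lincomb_grs[OF k(2)])
    show "(0::'a) ^ (q + 1) = 1 \<or> herm_self_orth q N (range (lincomb k2 ?B2))"
      using orth22 by (auto simp: herm_self_orth_def range_lincomb_grs[OF k(2)])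
  qed (use C1(2) C2(2) in auto)
qed

lemma subfield_herm_self_orth_code:
  assumes card: "card (UNIV :: 'a::field set) = q * q" and q: "q = 2 ^ r" "0 < r"
    and k: "0 < k1" "0 < k2" "k1 + k2 + t \<le> q" and k2: "2 * t + 2 * k2 \<le> q \<or> k2 = 1 \<and> t + 2 \<le> q"
  shows "\<exists>C :: (nat \<Rightarrow> 'a) set. linear_code (2 * (q - t)) (k1 + k2)
           (min (2 * (q - t + 1 - k1)) (q - t + 1 - k2)) C \<and> herm_self_orth q (2 * (q - t)) C"
proof -
  note F = square_field_char_2[OF card q]
  obtain T :: "'a set" where T: "T \<subseteq> {x. x ^ q = x}" "card T = t" "finite T"
    using obtain_subset_with_card_n[of t "{x::'a. x ^ q = x}"] F(5) k(3) by auto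
  have "finite ({x::'a. x ^ q = x} - T)" "card ({x::'a. x ^ q = x} - T) = q - t"
    using F(1,5) T card_ge_0_finite[of "{x::'a. x ^ q = x}"] by (simp_all add: card_Diff_subset)
  then obtain p where p: "bij_betw p {..<q - t} ({x::'a. x ^ q = x} - T)"
    using ex_bij_betw_nat_finite by (metis atLeast0LessThan)
  show ?thesis
    by (rule subfield_plotkin_code[OF card q T(1,3) p]) (use k k2 T(2) in auto)
qed

section \<open>Extended codes on the whole field\<close>

lemma coeff_mult_degree_le:
  assumes "degree p \<le> a" "degree q \<le> b"
  shows "coeff (p * q) (a + b) = coeff p a * (coeff q b :: 'a::idom)"
proof (cases "degree p = a \<and> degree q = b")
  case True
  then show ?thesis
    using coeff_mult_degree_sum[of p q] by simp
next
  case False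
  then have "degree p < a \<or> degree q < b"
    using assms by auto
  then show ?thesis
    using assms degree_mult_le[of p q] by (auto simp: coeff_eq_0)
qed

lemma coeff_mult3_degree_le:
  assumes "degree a \<le> i" "degree b \<le> j" "degree c \<le> l"
  shows "coeff (a * b * c) (i + j + l) = coeff a i * coeff b j * (coeff c l :: 'a::idom)"
proof -
  have "degree (a * b) \<le> i + j"
    using degree_mult_le[of a b] assms by linarith
  then show ?thesis
    using coeff_mult_degree_le[OF _ assms(3)] coeff_mult_degree_le[OF assms(1,2)] by simp
qed

lemma herm_orth_ext_grs_frobenius:
  fixes f g P :: "'a::field poly"
  assumes card: "card (UNIV :: 'a set) = q * q" and q: "q = 2 ^ r" "0 < r"
    and p: "bij_betw p {..<q * q} UNIV" and P: "degree P = m" "lead_coeff P = 1"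
    and k: "m + k1 + k2 = q * q + 1" "0 < k1" "0 < k2" and fg: "degree f < k1" "degree g < k2"
  shows "herm_inner q (Suc (q * q)) (ext_grs k1 (q * q) p (\<lambda>i. poly P (p i)) f)
           (ext_grs k2 (q * q) (\<lambda>i. p i ^ q) (\<lambda>i. 1) g) = 0"
proof -
  note F = square_field_char_2[OF card q]
  let ?g = "map_poly (\<lambda>c. c ^ q) g"
  have "herm_inner q (q * q) (grs (q * q) p (\<lambda>i. poly P (p i)) f) (grs (q * q) (\<lambda>i. p i ^ q) (\<lambda>i. 1) g)
      = (\<Sum>i<q * q. poly P (p i) * 1 ^ q * poly f (p i) * poly ?g ((p i ^ q) ^ q))"
    by (rule herm_inner_grs[OF F(3)])
  also have "\<dots> = (\<Sum>i<q * q. poly (P * f * ?g) (p i))"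
    using F(4) by (simp add: power_mult[symmetric])
  also have "\<dots> = (\<Sum>a\<in>UNIV. poly (P * f * ?g) a)"
    by (rule sum.reindex_bij_betw[OF p])
  also have "\<dots> = (\<Sum>a | a ^ (q * q) = a. poly (P * f * ?g) a)"
    using F(4) by simp
  \<comment> \<open>minus the top coefficient, which the coordinate at infinity cancels\<close>
  also have "\<dots> = - coeff (P * f * ?g) (q * q - 1)"
  proof (rule sum_poly_fixed_points)
    show "card {x::'a. x ^ (q * q) = x} = q * q" "of_nat (q * q) = (0::'a)"
      using F(4) card of_nat_card_UNIV_eq_0[OF F(7)] by simp_all
    show "degree (P * f * ?g) < q * q"
      using degree_mult_le[of "P * f" ?g] degree_mult_le[of P f] map_poly_degree_leq[of "\<lambda>c. c ^ q" g]
        P fg k by linarith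
  qed (use F(1) le_square[of q] in linarith)
  also have "coeff (P * f * ?g) (q * q - 1) = coeff f (k1 - 1) * coeff g (k2 - 1) ^ q"
    using coeff_mult3_degree_le[of P m f "k1 - 1" ?g "k2 - 1"] map_poly_degree_leq[of "\<lambda>c. c ^ q" g]
      P fg k F(1) by (simp add: coeff_map_poly)
  finally show ?thesis
    by (simp add: ext_grs_def herm_inner_fun_upd_Suc)
qed

lemma extended_herm_self_orth_code:
  assumes card: "card (UNIV :: 'a::field set) = q * q" and q: "q = 2 ^ r" "0 < r"
    and k: "m + k1 + k2 = q * q + 1" "0 < k1" "0 < k2"
    and d: "2 * (q * q - m mod 2 + 2 - k1) \<le> q * q + 2 - k2"
  shows "\<exists>C :: (nat \<Rightarrow> 'a) set. linear_code (2 * Suc (q * q)) (k1 + k2) (2 * (q * q - m mod 2 + 2 - k1)) C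
           \<and> herm_self_orth q (2 * Suc (q * q)) C"
proof -
  note F = square_field_char_2[OF card q]
  obtain p where p: "bij_betw p {..<q * q} (UNIV :: 'a set)"
    using ex_bij_betw_nat_finite[OF F(7)] card by (metis atLeast0LessThan)
  obtain \<mu> :: 'a where \<mu>: "\<mu> ^ (q + 1) = 1" "\<mu> \<noteq> 1"
    using exists_unit_circle_ne_1[OF card F(1)] by blast
  obtain P :: "'a poly" where P: "degree P = m" "lead_coeff P = 1" "card {x. poly P x = 0} = m mod 2"
    using exists_monic_poly_card_roots[OF F(7)] by blast
  have inj1: "inj_on p {..<q * q}"
    using p by (rule bij_betw_imp_inj_on)
  have inj2: "inj_on (\<lambda>i. p i ^ q) {..<q * q}"
    using inj1 F(4) by (rule inj_on_frobenius_comp)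
  have wt1: "wt (q * q) (\<lambda>i. poly P (p i)) = q * q - m mod 2"
    using wt_poly_bij_betw[OF p] P(3) by simp
  have wt2: "wt (q * q) (\<lambda>i. 1 :: 'a) = q * q"
    by (simp add: wt_def)
  have k_le: "k1 \<le> q * q - m mod 2" "k2 \<le> q * q"
    using k mod_less_eq_dividend[of m 2] by linarith+
  let ?B1 = "\<lambda>j. ext_grs k1 (q * q) p (\<lambda>i. poly P (p i)) (monom 1 j)"
  let ?B2 = "\<lambda>j. ext_grs k2 (q * q) (\<lambda>i. p i ^ q) (\<lambda>i. 1) (monom 1 j)"
  have gen1: "generates_code (Suc (q * q)) k1 (q * q - m mod 2 + 2 - k1) ?B1"
    using generates_code_ext_grs[OF inj1 k(2), of "\<lambda>i. poly P (p i)"] wt1 k_le by simp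
  have gen2: "generates_code (Suc (q * q)) k2 (q * q + 2 - k2) ?B2"
    using generates_code_ext_grs[OF inj2 k(3), of "\<lambda>i. 1"] wt2 k_le by simp
  have attained1: "\<exists>u\<in>range (lincomb k1 ?B1). u \<noteq> 0 \<and> wt (Suc (q * q)) u = q * q - m mod 2 + 2 - k1"
    using ext_grs_attains[OF inj1 k(2), of "\<lambda>i. poly P (p i)"] wt1 k_le by simp
  have orth: "herm_inner q (Suc (q * q)) u v = 0"
    if "u \<in> range (lincomb k1 ?B1)" "v \<in> range (lincomb k2 ?B2)" for u v
    using that herm_orth_ext_grs_frobenius[OF card q p P(1,2) k]
    by (auto simp: range_lincomb_ext_grs[OF k(2)] range_lincomb_ext_grs[OF k(3)])
  have "\<exists>C :: (nat \<Rightarrow> 'a) set. linear_code (2 * Suc (q * q)) (k1 + k2)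
      (min (2 * (q * q - m mod 2 + 2 - k1)) (q * q + 2 - k2)) C \<and> herm_self_orth q (2 * Suc (q * q)) C"
    by (rule plotkin_code[OF F(2,3,4) gen1 gen2 \<mu>(2) orth]) (use \<mu>(1) attained1 d in auto)
  then show ?thesis
    using d by (simp add: min_absorb1)
qed

theorem theorem16:
  assumes "card (UNIV :: 'a::field set) = 16" and "card (UNIV :: 'b::field set) = 64"
  shows "(\<forall>(n, k, d) \<in> set [(4,2,2), (6,3,3), (8,4,4), (34,15,14), (34,16,12), (34,17,10)].
            \<exists>C :: (nat \<Rightarrow> 'a::field) set. linear_code n k d C \<and> herm_self_orth 4 n C)
       \<and> (\<forall>(n, k, d) \<in> set [(4,2,2), (6,3,3), (8,4,4), (10,4,5), (10,5,4), (12,5,6), (12,6,5),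
                            (14,5,7), (14,7,6), (16,6,8), (16,7,7), (16,8,6), (130,45,58),
                            (130,50,48), (130,55,38), (130,60,28), (130,65,18)].
            \<exists>C :: (nat \<Rightarrow> 'b::field) set. linear_code n k d C \<and> herm_self_orth 8 n C)"
proof -
  have F16: "card (UNIV :: 'a set) = 4 * 4" and F64: "card (UNIV :: 'b set) = 8 * 8"
    using assms by simp_all
  have "\<forall>(t, k1, k2) \<in> set [(2, 1, 1), (1, 2, 1), (0, 3, 1)].
      \<exists>C :: (nat \<Rightarrow> 'a) set. linear_code (2 * (4 - t)) (k1 + k2)
        (min (2 * (4 - t + 1 - k1)) (4 - t + 1 - k2)) C \<and> herm_self_orth 4 (2 * (4 - t)) C"
    by (clarify, rule subfield_herm_self_orth_code[OF F16, where r = 2]) auto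
  moreover have "\<forall>(m, k1, k2) \<in> set [(2, 11, 4), (1, 11, 5), (0, 13, 4)].
      \<exists>C :: (nat \<Rightarrow> 'a) set. linear_code (2 * Suc (4 * 4)) (k1 + k2)
        (2 * (4 * 4 - m mod 2 + 2 - k1)) C \<and> herm_self_orth 4 (2 * Suc (4 * 4)) C"
    by (clarify, rule extended_herm_self_orth_code[OF F16, where r = 2]) auto
  moreover have "\<forall>(t, k1, k2) \<in> set [(6, 1, 1), (5, 2, 1), (4, 3, 1), (3, 3, 1), (3, 4, 1), (2, 4, 1),
      (2, 4, 2), (1, 4, 1), (1, 5, 2), (0, 5, 1), (0, 5, 2), (0, 6, 2)].
      \<exists>C :: (nat \<Rightarrow> 'b) set. linear_code (2 * (8 - t)) (k1 + k2)
        (min (2 * (8 - t + 1 - k1)) (8 - t + 1 - k2)) C \<and> herm_self_orth 8 (2 * (8 - t)) C"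
    by (clarify, rule subfield_herm_self_orth_code[OF F64, where r = 3]) auto
  moreover have "\<forall>(m, k1, k2) \<in> set [(20, 37, 8), (15, 41, 9), (10, 47, 8), (5, 51, 9), (0, 57, 8)].
      \<exists>C :: (nat \<Rightarrow> 'b) set. linear_code (2 * Suc (8 * 8)) (k1 + k2)
        (2 * (8 * 8 - m mod 2 + 2 - k1)) C \<and> herm_self_orth 8 (2 * Suc (8 * 8)) C"
    by (clarify, rule extended_herm_self_orth_code[OF F64, where r = 3]) auto
  \<comment> \<open>simp rewrites the dimension \<open>1 + 1\<close> to \<open>Suc (Suc 0)\<close>, hence the reverse rule\<close>
  ultimately show ?thesis
    by (simp add: numeral_2_eq_2[symmetric])
qed

end
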